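(* For every sufficiently large integer $\ell$, with $m=2^\ell$, and every unsatisfiable $k$-CNF formula $\varphi$ with $M$ clauses on $N$ Boolean variables, $\varphi\circ\mathrm{IND}_m^N$ is a $k(\ell+1)$-CNF formula with $M'=m^kM$ clauses on $N'=N(\ell+m)$ variables, and $$\mathrm{tree}_{Res(\oplus)}(\varphi\circ\mathrm{IND}_m^N)\ge\mathrm{tree}_{Res}(\varphi)\ge 2^{\mathrm{width}_{Res}(\varphi)-k}.$$
   Context: Lifted CNF: with $m=2^\ell$, $\varphi\circ\mathrm{IND}_m^N$ has variables $x_{i,j'}$ ($i\in[N]$, $0\le j'<\ell$) and $y_{i,j}$ ($i\in[N]$, $0\le j<m$); $x_{i,*}$ encodes in binary a number $x_i\in\{0,\dots,m-1\}$ and $z_i$ is interpreted as $y_{i,x_i}$. Each clause $z_{i_1}^{b_1}\lor\cdots\lor z_{i_k}^{b_k}$ of $\varphi$ is replaced by $m^k$ clauses, one for each tuple $(j_1,\dots,j_k)\in\{0,\dots,m-1\}^k$, expressing: if $x_{i_1,*}$ encodes $j_1$, ..., and $x_{i_k,*}$ encodes $j_k$, then $y_{i_1,j_1}^{b_1}\lor\cdots\lor y_{i_k,j_k}^{b_k}$. A resolution refutation of $\varphi$ is a sequence of clauses ending in the empty clause, each being a clause of $\varphi$ or derived from two earlier ones by $\frac{A\lor z,\ B\lor\bar z}{A\lor B}$; it is tree-like if its derivation dag is a tree. $\mathrm{tree}_{Res}(\varphi)$ is the minimum size of a tree-like resolution refutation; $\mathrm{width}_{Res}(\varphi)$ is the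 minimum, over all resolution refutations, of the maximum clause length in it. A $Res(\oplus)$ refutation of $\varphi$ on variables $Z$ is a sequence of affine subspaces of $\mathbb{F}_2^Z$ ending in $\mathbb{F}_2^Z$, each being the set of assignments falsifying some clause of $\varphi$ or derived from two earlier subspaces $A,B$ as any affine subspace $C\subseteq A\cup B$; tree-like if its derivation dag is a tree. $\mathrm{tree}_{Res(\oplus)}(\varphi)$ is the minimum size of a tree-like $Res(\oplus)$ refutation. *)

theory Defs
  imports Complex_Main "HOL-Library.FuncSet"
begin

text \<open>A literal is a pair (v, b): (v, True) is the positive literal v, (v, False) is its negation.
  A clause is a finite set of literals (their disjunction); a CNF is a set of clauses.\<close>

type_synonym 'v lit = "'v \<times> bool"
type_synonym 'v clause = "'v lit set"
type_synonym 'v cnf = "'v clause set"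

definition sat_lit :: "('v \<Rightarrow> bool) \<Rightarrow> 'v lit \<Rightarrow> bool" where
  "sat_lit \<alpha> l \<longleftrightarrow> \<alpha> (fst l) = snd l"

definition satisfiable :: "'v cnf \<Rightarrow> bool" where
  "satisfiable F \<longleftrightarrow> (\<exists>\<alpha>. \<forall>C\<in>F. \<exists>l\<in>C. sat_lit \<alpha> l)"

definition resolvent :: "'v clause \<Rightarrow> 'v clause \<Rightarrow> 'v clause \<Rightarrow> bool" where
  "resolvent C1 C2 D \<longleftrightarrow>
     (\<exists>A B z. C1 = A \<union> {(z, True)} \<and> C2 = B \<union> {(z, False)} \<and> D = A \<union> B)"

definition res_refutation :: "'v cnf \<Rightarrow> 'v clause list \<Rightarrow> bool" where
  "res_refutation F Cs \<longleftrightarrow> Cs \<noteq> [] \<and> last Cs = {} \<and>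
     (\<forall>i<length Cs. Cs ! i \<in> F \<or> (\<exists>p<i. \<exists>q<i. resolvent (Cs ! p) (Cs ! q) (Cs ! i)))"

definition width_Res :: "'v cnf \<Rightarrow> nat" where
  "width_Res F = (LEAST w. \<exists>Cs. res_refutation F Cs \<and> (\<forall>C\<in>set Cs. card C \<le> w))"

text \<open>Tree-like derivations are represented as derivation trees; the size of a tree is the
  number of its nodes (= number of lines of the corresponding tree-like sequence).\<close>
datatype 'a ptree = Ax 'a | Der 'a "'a ptree" "'a ptree"

fun root :: "'a ptree \<Rightarrow> 'a" where
  "root (Ax a) = a"
| "root (Der a _ _) = a"

fun psize :: "'a ptree \<Rightarrow> nat" where
  "psize (Ax _) = 1"
| "psize (Der _ t1 t2) = Suc (psize t1 + psize t2)"

fun res_tree_valid :: "'v cnf \<Rightarrow> 'v clause ptree \<Rightarrow> bool" where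
  "res_tree_valid F (Ax C) \<longleftrightarrow> C \<in> F"
| "res_tree_valid F (Der D t1 t2) \<longleftrightarrow>
     res_tree_valid F t1 \<and> res_tree_valid F t2 \<and> resolvent (root t1) (root t2) D"

definition tree_Res :: "'v cnf \<Rightarrow> nat" where
  "tree_Res F = (LEAST s. \<exists>t. res_tree_valid F t \<and> root t = {} \<and> psize t = s)"

text \<open>F_2^Z is represented as the Boolean assignments vanishing outside Z.\<close>
definition cube :: "'v set \<Rightarrow> ('v \<Rightarrow> bool) set" where
  "cube Z = {\<alpha>. \<forall>v. v \<notin> Z \<longrightarrow> \<alpha> v = False}"

text \<open>Affine subspaces of F_2^Z: solution sets of systems of linear equations
  (sum over v in U of x_v = c) over F_2 (possibly empty).\<close>
definition affine_sub :: "'v set \<Rightarrow> ('v \<Rightarrow> bool) set \<Rightarrow> bool" where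
  "affine_sub Z S \<longleftrightarrow> (\<exists>E :: ('v set \<times> bool) set. (\<forall>(U, c)\<in>E. U \<subseteq> Z) \<and>
     S = {\<alpha> \<in> cube Z. \<forall>(U, c)\<in>E. odd (card {v\<in>U. \<alpha> v}) = c})"

definition falsif :: "'v set \<Rightarrow> 'v clause \<Rightarrow> ('v \<Rightarrow> bool) set" where
  "falsif Z C = {\<alpha> \<in> cube Z. \<forall>l\<in>C. \<not> sat_lit \<alpha> l}"

fun resx_tree_valid :: "'v set \<Rightarrow> 'v cnf \<Rightarrow> ('v \<Rightarrow> bool) set ptree \<Rightarrow> bool" where
  "resx_tree_valid Z F (Ax S) \<longleftrightarrow> (\<exists>C\<in>F. S = falsif Z C)"
| "resx_tree_valid Z F (Der S t1 t2) \<longleftrightarrow>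
     resx_tree_valid Z F t1 \<and> resx_tree_valid Z F t2 \<and> affine_sub Z S \<and> S \<subseteq> root t1 \<union> root t2"

definition tree_ResX :: "'v set \<Rightarrow> 'v cnf \<Rightarrow> nat" where
  "tree_ResX Z F = (LEAST s. \<exists>t. resx_tree_valid Z F t \<and> root t = cube Z \<and> psize t = s)"

text \<open>X i j' is x_{i,j'} (j' < l), Y i j is y_{i,j} (j < m).\<close>
datatype lvar = X nat nat | Y nat nat

definition lift_vars :: "nat \<Rightarrow> nat \<Rightarrow> lvar set" where
  "lift_vars N l = {X i j | i j. i < N \<and> j < l} \<union> {Y i j | i j. i < N \<and> j < 2 ^ l}"

text \<open>For a clause C and a choice tau of an index tau(lit) < m for every literal of C,
  the clause "if x_{i,*} encodes tau(i,b) for all (i,b) in C then OR of y_{i,tau(i,b)}^b".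
  x_{i,*} encodes j in binary: x_{i,j'} = bit j' of j.\<close>
definition lift_clause :: "nat \<Rightarrow> nat clause \<Rightarrow> (nat lit \<Rightarrow> nat) \<Rightarrow> lvar clause" where
  "lift_clause l C \<tau> =
     (\<Union>lt\<in>C. {(X (fst lt) j, \<not> odd (\<tau> lt div 2 ^ j)) | j. j < l})
     \<union> {(Y (fst lt) (\<tau> lt), snd lt) | lt. lt \<in> C}"

definition lift :: "nat \<Rightarrow> nat cnf \<Rightarrow> lvar cnf" where
  "lift l F = {lift_clause l C \<tau> | C \<tau>. C \<in> F \<and> \<tau> \<in> C \<rightarrow>\<^sub>E {..<2 ^ l}}"

end

theory Submission
  imports Defs
begin

text \<open>
  The bound \<open>2 ^ (width - k) \<le> tree_Res\<close> is the tree-like case of Ben-Sasson and Wigderson's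
  size-width relation: the last step of a refutation tree resolves \<open>z\<close> against \<open>\<not> z\<close>, the two
  subtrees refute the restrictions of \<open>\<phi>\<close> at \<open>z = 0\<close> and \<open>z = 1\<close>, and only the smaller one has to
  be refuted with one extra unit of width.

  The lifting bound is a simulation. Walking down a tree-like \<open>Res(\<oplus>)\<close> refutation of the
  lifted formula from its root, we keep an affine embedding of the whole cube into the current
  affine set; it leaves the blocks of the variables of \<open>\<phi>\<close> not queried so far free, and on every
  queried block it forces the y-variable selected by the x-variables to the value of a partial
  assignment \<open>\<rho>\<close> of \<open>\<phi>\<close>. If the embedded set lies in neither child, membership in one child
  is an affine function of the free coordinates that depends on some free coordinate \<open>u\<close>, and
  fixing the block of \<open>u\<close> (with a pointer avoiding \<open>u\<close>, and \<open>u\<close> corrected) gives embeddings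
  into both children, extending \<open>\<rho>\<close> by both values of that block's variable. At a leaf the
  lifted clause must be falsified by \<open>\<rho>\<close>, so the queried variables form a resolution tree for
  \<open>\<phi>\<close> that is no larger than the given one.
\<close>

section \<open>Tree-like resolution: size versus width\<close>

lemma res_tree_resolve_subsumed:
  assumes "res_tree_valid F s\<^sub>1" "root s\<^sub>1 \<subseteq> A \<union> {(z, True)}"
    and "res_tree_valid F s\<^sub>2" "root s\<^sub>2 \<subseteq> B \<union> {(z, False)}"
  shows "\<exists>s. res_tree_valid F s \<and> root s \<subseteq> A \<union> B \<and> psize s \<le> Suc (psize s\<^sub>1 + psize s\<^sub>2)"
proof -
  consider "(z, True) \<notin> root s\<^sub>1" | "(z, False) \<notin> root s\<^sub>2" | "(z, True) \<in> root s\<^sub>1" "(z, False) \<in> root s\<^sub>2"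
    by blast
  then show ?thesis
  proof cases
    case 1
    then show ?thesis using assms(1,2) by (intro exI[of _ s\<^sub>1]) auto
  next
    case 2
    then show ?thesis using assms(3,4) by (intro exI[of _ s\<^sub>2]) auto
  next
    case 3
    let ?D = "(root s\<^sub>1 - {(z, True)}) \<union> (root s\<^sub>2 - {(z, False)})"
    have "resolvent (root s\<^sub>1) (root s\<^sub>2) ?D"
      unfolding resolvent_def using 3 by (intro exI[of _ "root s\<^sub>1 - {(z, True)}"] exI[of _ "root s\<^sub>2 - {(z, False)}"] exI[of _ z]) auto
    then show ?thesis using assms by (intro exI[of _ "Der ?D s\<^sub>1 s\<^sub>2"]) auto
  qed
qed

definition cnf_restrict :: "'v cnf \<Rightarrow> 'v \<Rightarrow> bool \<Rightarrow> 'v cnf" where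
  "cnf_restrict F v b = {C - {(v, \<not> b)} | C. C \<in> F \<and> (v, b) \<notin> C}"

lemma res_tree_restrict:
  assumes "res_tree_valid F t"
  shows "(v, b) \<in> root t \<or> (\<exists>t'. res_tree_valid (cnf_restrict F v b) t'
    \<and> root t' \<subseteq> root t - {(v, \<not> b)} \<and> psize t' \<le> psize t)"
  using assms
proof (induction t)
  case (Ax C)
  then show ?case
    by (cases "(v, b) \<in> C") (auto simp: cnf_restrict_def intro!: exI[of _ "Ax (C - {(v, \<not> b)})"])
next
  case (Der D t\<^sub>1 t\<^sub>2)
  obtain A B z where ABz: "root t\<^sub>1 = A \<union> {(z, True)}" "root t\<^sub>2 = B \<union> {(z, False)}" "D = A \<union> B"
    using Der.prems by (auto simp: resolvent_def)
  have IH: "(v, b) \<in> root t\<^sub>1 \<or> (\<exists>t'. res_tree_valid (cnf_restrict F v b) t'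
          \<and> root t' \<subseteq> root t\<^sub>1 - {(v, \<not> b)} \<and> psize t' \<le> psize t\<^sub>1)"
      "(v, b) \<in> root t\<^sub>2 \<or> (\<exists>t'. res_tree_valid (cnf_restrict F v b) t'
          \<and> root t' \<subseteq> root t\<^sub>2 - {(v, \<not> b)} \<and> psize t' \<le> psize t\<^sub>2)"
    using Der.IH Der.prems by simp_all
  show ?case
  proof (cases "z = v")
    case True
    \<comment> \<open>the premise carrying the literal \<open>(v, \<not> b)\<close> already yields the restricted derivation\<close>
    define s where "s = (if b then t\<^sub>2 else t\<^sub>1)"
    have s: "root s \<subseteq> D \<union> {(v, \<not> b)}" "psize s \<le> psize (Der D t\<^sub>1 t\<^sub>2)"
      using ABz True by (auto simp: s_def)
    have "(v, b) \<in> root s \<or> (\<exists>t'. res_tree_valid (cnf_restrict F v b) t'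
        \<and> root t' \<subseteq> root s - {(v, \<not> b)} \<and> psize t' \<le> psize s)"
      using IH by (cases b) (simp_all add: s_def)
    then show ?thesis using s by (auto intro: order_trans)
  next
    case False
    show ?thesis
    proof (cases "(v, b) \<in> root t\<^sub>1 \<or> (v, b) \<in> root t\<^sub>2")
      case True
      then show ?thesis using ABz False by auto
    next
      case not_sat: False
      obtain t\<^sub>1' t\<^sub>2' where
        t\<^sub>1': "res_tree_valid (cnf_restrict F v b) t\<^sub>1'" "root t\<^sub>1' \<subseteq> root t\<^sub>1 - {(v, \<not> b)}"
          "psize t\<^sub>1' \<le> psize t\<^sub>1" and
        t\<^sub>2': "res_tree_valid (cnf_restrict F v b) t\<^sub>2'" "root t\<^sub>2' \<subseteq> root t\<^sub>2 - {(v, \<not> b)}"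
          "psize t\<^sub>2' \<le> psize t\<^sub>2"
        using IH not_sat by blast
      have "root t\<^sub>1' \<subseteq> (A - {(v, \<not> b)}) \<union> {(z, True)}" "root t\<^sub>2' \<subseteq> (B - {(v, \<not> b)}) \<union> {(z, False)}"
        using t\<^sub>1'(2) t\<^sub>2'(2) ABz(1,2) by auto
      then obtain t' where "res_tree_valid (cnf_restrict F v b) t'"
        "root t' \<subseteq> (A - {(v, \<not> b)}) \<union> (B - {(v, \<not> b)})" "psize t' \<le> Suc (psize t\<^sub>1' + psize t\<^sub>2')"
        using res_tree_resolve_subsumed[OF t\<^sub>1'(1) _ t\<^sub>2'(1)] by blast
      then show ?thesis using t\<^sub>1'(3) t\<^sub>2'(3) ABz(3) by (intro disjI2 exI[of _ t']) auto
    qed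
  qed
qed

inductive res_derivable :: "nat \<Rightarrow> 'v cnf \<Rightarrow> 'v clause \<Rightarrow> bool" for w F where
  axiom: "C \<in> F \<Longrightarrow> card C \<le> w \<Longrightarrow> res_derivable w F C"
| resolve: "res_derivable w F C\<^sub>1 \<Longrightarrow> res_derivable w F C\<^sub>2 \<Longrightarrow> resolvent C\<^sub>1 C\<^sub>2 D \<Longrightarrow> card D \<le> w
    \<Longrightarrow> res_derivable w F D"

lemma res_derivable_mono: "res_derivable w F C \<Longrightarrow> w \<le> w' \<Longrightarrow> res_derivable w' F C"
  by (induction rule: res_derivable.induct) (auto intro: res_derivable.intros)

lemma res_derivable_trans:
  "res_derivable w' G D \<Longrightarrow> \<forall>C\<in>G. res_derivable w F C \<Longrightarrow> res_derivable (max w w') F D"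
  by (induction rule: res_derivable.induct) (auto intro: res_derivable.intros res_derivable_mono)

lemma res_derivable_unrestrict:
  "res_derivable w (cnf_restrict F v b) C
    \<Longrightarrow> \<exists>C'. res_derivable (Suc w) F C' \<and> (C' = C \<or> C' = insert (v, \<not> b) C)"
proof (induction rule: res_derivable.induct)
  case (axiom C)
  then obtain C\<^sub>0 where C\<^sub>0: "C = C\<^sub>0 - {(v, \<not> b)}" "C\<^sub>0 \<in> F" unfolding cnf_restrict_def by blast
  then have "C\<^sub>0 = C \<or> C\<^sub>0 = insert (v, \<not> b) C" by blast
  moreover have "card (insert (v, \<not> b) C) \<le> Suc w" using axiom(2) by (simp add: card_insert_le_m1)
  ultimately have "res_derivable (Suc w) F C\<^sub>0" using C\<^sub>0(2) axiom(2) by (auto intro: res_derivable.axiom)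
  then show ?case using \<open>C\<^sub>0 = C \<or> C\<^sub>0 = insert (v, \<not> b) C\<close> by blast
next
  case (resolve C\<^sub>1 C\<^sub>2 D)
  obtain C\<^sub>1' C\<^sub>2' where C':
      "res_derivable (Suc w) F C\<^sub>1'" "C\<^sub>1' = C\<^sub>1 \<or> C\<^sub>1' = insert (v, \<not> b) C\<^sub>1"
      "res_derivable (Suc w) F C\<^sub>2'" "C\<^sub>2' = C\<^sub>2 \<or> C\<^sub>2' = insert (v, \<not> b) C\<^sub>2"
    using resolve.IH by blast
  obtain A B z where ABz: "C\<^sub>1 = A \<union> {(z, True)}" "C\<^sub>2 = B \<union> {(z, False)}" "D = A \<union> B"
    using resolve.hyps(3) unfolding resolvent_def by blast
  define A' where "A' = A \<union> (C\<^sub>1' - C\<^sub>1)"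
  define B' where "B' = B \<union> (C\<^sub>2' - C\<^sub>2)"
  have "C\<^sub>1' = A' \<union> {(z, True)}" "C\<^sub>2' = B' \<union> {(z, False)}"
    using C'(2,4) ABz(1,2) unfolding A'_def B'_def by auto
  then have "resolvent C\<^sub>1' C\<^sub>2' (A' \<union> B')" unfolding resolvent_def by blast
  moreover have "D \<subseteq> A' \<union> B'" "A' \<union> B' \<subseteq> insert (v, \<not> b) D"
    unfolding A'_def B'_def ABz(3) using C'(2,4) ABz(1,2) by auto
  then have "A' \<union> B' = D \<or> A' \<union> B' = insert (v, \<not> b) D" by blast
  moreover have "card (insert (v, \<not> b) D) \<le> Suc w" using resolve.hyps(4) by (simp add: card_insert_le_m1)
  ultimately show ?case using res_derivable.resolve[OF C'(1,3)] resolve.hyps(4) by fastforce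
qed

lemma resolvent_unit:
  assumes "(z, b) \<in> C"
  shows "resolvent C {(z, \<not> b)} (C - {(z, b)}) \<or> resolvent {(z, \<not> b)} C (C - {(z, b)})"
proof (cases b)
  case True
  then have "resolvent C {(z, \<not> b)} (C - {(z, b)})"
    unfolding resolvent_def using assms by (intro exI[of _ "C - {(z, b)}"] exI[of _ "{}"] exI[of _ z]) auto
  then show ?thesis ..
next
  case False
  then have "resolvent {(z, \<not> b)} C (C - {(z, b)})"
    unfolding resolvent_def using assms by (intro exI[of _ "{}"] exI[of _ "C - {(z, b)}"] exI[of _ z]) auto
  then show ?thesis ..
qed

lemma cnf_restrict_card_le: "\<forall>C\<in>F. card C \<le> k \<Longrightarrow> \<forall>C\<in>cnf_restrict F v b. card C \<le> k"
  unfolding cnf_restrict_def by (auto intro: le_trans[OF card_Diff1_le])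

text \<open>The width-combination step of Ben-Sasson and Wigderson: a refutation of \<open>F|\<^bsub>z=b\<^esub>\<close>
  becomes a derivation of \<open>{}\<close> or of the unit clause \<open>z = \<not> b\<close> from \<open>F\<close>; resolving that unit
  against \<open>F\<close> yields \<open>F|\<^bsub>z=\<not> b\<^esub>\<close>, which is then refuted.\<close>

lemma res_derivable_split_refutation:
  assumes r\<^sub>0: "res_derivable w\<^sub>0 (cnf_restrict F z b) {}" and r\<^sub>1: "res_derivable w\<^sub>1 (cnf_restrict F z (\<not> b)) {}"
    and k: "\<forall>C\<in>F. card C \<le> k"
  shows "res_derivable (max (Suc w\<^sub>0) (max k w\<^sub>1)) F {}"
proof -
  obtain C where C: "res_derivable (Suc w\<^sub>0) F C" "C = {} \<or> C = {(z, \<not> b)}"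
    using res_derivable_unrestrict[OF r\<^sub>0] by auto
  show ?thesis
  proof (cases "C = {}")
    case True
    then show ?thesis using C(1) res_derivable_mono by fastforce
  next
    case False
    then have unit: "res_derivable (max (Suc w\<^sub>0) k) F {(z, \<not> b)}"
      using C res_derivable_mono by fastforce
    have "res_derivable (max (Suc w\<^sub>0) k) F C'" if C': "C' \<in> cnf_restrict F z (\<not> b)" for C'
    proof -
      obtain C\<^sub>0 where C\<^sub>0: "C' = C\<^sub>0 - {(z, b)}" "C\<^sub>0 \<in> F"
        using C' unfolding cnf_restrict_def by auto
      have ax: "res_derivable (max (Suc w\<^sub>0) k) F C\<^sub>0"
        using C\<^sub>0(2) k by (intro res_derivable.axiom) (auto simp: le_max_iff_disj)
      have card: "card C' \<le> max (Suc w\<^sub>0) k"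
        using cnf_restrict_card_le[OF k] C' by fastforce
      show ?thesis
      proof (cases "(z, b) \<in> C\<^sub>0")
        case True
        then have "resolvent C\<^sub>0 {(z, \<not> b)} C' \<or> resolvent {(z, \<not> b)} C\<^sub>0 C'"
          using resolvent_unit C\<^sub>0(1) by simp
        then show ?thesis
          using res_derivable.resolve[OF ax unit _ card] res_derivable.resolve[OF unit ax _ card] by blast
      qed (use ax C\<^sub>0(1) in simp)
    qed
    then have "res_derivable (max (max (Suc w\<^sub>0) k) w\<^sub>1) F {}"
      using res_derivable_trans[OF r\<^sub>1] by blast
    then show ?thesis by (simp add: max.assoc)
  qed
qed

lemma res_tree_refutation_width:
  assumes "\<forall>C\<in>F. card C \<le> k" "res_tree_valid F t" "root t = {}"
  shows "\<exists>d. res_derivable (k + d) F {} \<and> 2 ^ d \<le> psize t"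
  using assms
proof (induction "psize t" arbitrary: F t rule: less_induct)
  case less
  show ?case
  proof (cases t)
    case (Ax C)
    then show ?thesis using less.prems by (intro exI[of _ 0]) (auto intro: res_derivable.axiom)
  next
    case (Der D t\<^sub>1 t\<^sub>2)
    then obtain z where z: "root t\<^sub>1 = {(z, True)}" "root t\<^sub>2 = {(z, False)}"
      using less.prems by (auto simp: resolvent_def)
    define child where "child b = (if b then t\<^sub>2 else t\<^sub>1)" for b
    have "\<exists>d. res_derivable (k + d) (cnf_restrict F z b) {} \<and> 2 ^ d \<le> psize (child b)" for b
    proof -
      obtain t' where t': "res_tree_valid (cnf_restrict F z b) t'" "root t' = {}" "psize t' \<le> psize (child b)"
        using res_tree_restrict[of F "child b" z b] less.prems Der z by (cases b) (auto simp: child_def)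
      have "psize t' < psize t" using t'(3) Der by (cases b) (auto simp: child_def)
      then obtain d where "res_derivable (k + d) (cnf_restrict F z b) {}" "2 ^ d \<le> psize t'"
        using less.hyps cnf_restrict_card_le[OF less.prems(1)] t'(1,2) by blast
      then show ?thesis using t'(3) by (intro exI[of _ d]) auto
    qed
    then obtain d where d: "res_derivable (k + d b) (cnf_restrict F z b) {}" "2 ^ d b \<le> psize (child b)"
      for b by metis
    \<comment> \<open>pay the extra unit of width on the side of the smaller subtree\<close>
    define b where "b = (psize t\<^sub>2 \<le> psize t\<^sub>1)"
    have size: "2 * psize (child b) < psize t" "psize (child (\<not> b)) < psize t"
      using Der by (auto simp: b_def child_def)
    have "res_derivable (max (Suc (k + d b)) (max k (k + d (\<not> b)))) F {}"
      by (rule res_derivable_split_refutation[OF d(1) d(1) less.prems(1)])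
    moreover have "max (Suc (k + d b)) (max k (k + d (\<not> b))) = k + max (Suc (d b)) (d (\<not> b))"
      by simp
    moreover have "2 ^ max (Suc (d b)) (d (\<not> b)) \<le> psize t"
      using d(2)[of b] d(2)[of "\<not> b"] size by (auto simp: max_def)
    ultimately show ?thesis by metis
  qed
qed

definition res_sequence :: "'v cnf \<Rightarrow> 'v clause list \<Rightarrow> bool" where
  "res_sequence F Cs \<longleftrightarrow>
     (\<forall>i<length Cs. Cs ! i \<in> F \<or> (\<exists>p<i. \<exists>q<i. resolvent (Cs ! p) (Cs ! q) (Cs ! i)))"

lemma res_sequence_snoc:
  "res_sequence F (Cs @ [D]) \<longleftrightarrow>
     res_sequence F Cs \<and> (D \<in> F \<or> (\<exists>C\<^sub>1\<in>set Cs. \<exists>C\<^sub>2\<in>set Cs. resolvent C\<^sub>1 C\<^sub>2 D))"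
proof -
  have "res_sequence F (Cs @ [D]) \<longleftrightarrow> res_sequence F Cs
      \<and> (D \<in> F \<or> (\<exists>p<length Cs. \<exists>q<length Cs. resolvent (Cs ! p) (Cs ! q) D))"
    unfolding res_sequence_def length_append_singleton All_less_Suc
    by (simp add: nth_append conj_commute cong: conj_cong)
  moreover have "(\<exists>p<length Cs. \<exists>q<length Cs. resolvent (Cs ! p) (Cs ! q) D)
      \<longleftrightarrow> (\<exists>C\<^sub>1\<in>set Cs. \<exists>C\<^sub>2\<in>set Cs. resolvent C\<^sub>1 C\<^sub>2 D)"
    by (metis in_set_conv_nth)
  ultimately show ?thesis by simp
qed

lemma res_sequence_append: "res_sequence F Cs \<Longrightarrow> res_sequence F Ds \<Longrightarrow> res_sequence F (Cs @ Ds)"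
proof (induction Ds rule: rev_induct)
  case Nil
  then show ?case by simp
next
  case (snoc D Ds)
  then show ?case unfolding append_assoc[symmetric] res_sequence_snoc by auto
qed

lemma res_derivable_sequence:
  "res_derivable w F C \<Longrightarrow> \<exists>Cs. Cs \<noteq> [] \<and> last Cs = C \<and> res_sequence F Cs \<and> (\<forall>D\<in>set Cs. card D \<le> w)"
proof (induction rule: res_derivable.induct)
  case (axiom C)
  then show ?case by (intro exI[of _ "[C]"]) (auto simp: res_sequence_def)
next
  case (resolve C\<^sub>1 C\<^sub>2 D)
  then obtain Cs Ds where Cs: "Cs \<noteq> []" "last Cs = C\<^sub>1" "res_sequence F Cs" "\<forall>C\<in>set Cs. card C \<le> w"
    and Ds: "Ds \<noteq> []" "last Ds = C\<^sub>2" "res_sequence F Ds" "\<forall>C\<in>set Ds. card C \<le> w"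
    by blast
  have "C\<^sub>1 \<in> set (Cs @ Ds)" "C\<^sub>2 \<in> set (Cs @ Ds)" using Cs(1,2) Ds(1,2) by auto
  then have "res_sequence F ((Cs @ Ds) @ [D])"
    using res_sequence_append[OF Cs(3) Ds(3)] resolve.hyps(3) unfolding res_sequence_snoc by blast
  then show ?case using Cs(4) Ds(4) resolve.hyps(4) by (intro exI[of _ "(Cs @ Ds) @ [D]"]) auto
qed

lemma width_Res_le: "res_derivable w F {} \<Longrightarrow> width_Res F \<le> w"
  unfolding width_Res_def res_refutation_def
  using res_derivable_sequence[of w F "{}"] by (auto simp: res_sequence_def intro: Least_le)

lemma tree_Res_attained:
  assumes "res_tree_valid F s" "root s = {}"
  obtains t where "res_tree_valid F t" "root t = {}" "psize t = tree_Res F"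
proof -
  let ?P = "\<lambda>n. \<exists>t. res_tree_valid F t \<and> root t = {} \<and> psize t = n"
  have "?P (Least ?P)" by (rule LeastI_ex) (use assms in blast)
  then show ?thesis using that unfolding tree_Res_def by blast
qed

lemma tree_Res_le: "res_tree_valid F s \<Longrightarrow> root s = {} \<Longrightarrow> tree_Res F \<le> psize s"
  unfolding tree_Res_def by (rule Least_le) blast

lemma two_powr_width_Res_le_tree_Res:
  assumes "\<forall>C\<in>F. card C \<le> k" "res_tree_valid F s" "root s = {}"
  shows "2 powr (real (width_Res F) - real k) \<le> real (tree_Res F)"
proof -
  obtain t where t: "res_tree_valid F t" "root t = {}" "psize t = tree_Res F"
    using tree_Res_attained[OF assms(2,3)] .
  obtain d where d: "res_derivable (k + d) F {}" "2 ^ d \<le> psize t"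
    using res_tree_refutation_width[OF assms(1) t(1,2)] by blast
  have "2 powr (real (width_Res F) - real k) \<le> 2 powr (real d)"
    using width_Res_le[OF d(1)] by (intro powr_mono) auto
  also have "\<dots> = real (2 ^ d)" by (simp add: powr_realpow)
  also have "\<dots> \<le> real (tree_Res F)" using d(2) t(3) by linarith
  finally show ?thesis .
qed

section \<open>Affine sets and affine maps over \<open>\<bbbF>\<^sub>2\<close>\<close>

definition xor3 :: "('a \<Rightarrow> bool) \<Rightarrow> ('a \<Rightarrow> bool) \<Rightarrow> ('a \<Rightarrow> bool) \<Rightarrow> ('a \<Rightarrow> bool)" where
  "xor3 a b c = (\<lambda>v. a v \<noteq> (b v \<noteq> c v))"

lemma xor3_apply [simp]: "xor3 a b c v = (a v \<noteq> (b v \<noteq> c v))"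
  by (simp add: xor3_def)

text \<open>Over \<open>\<bbbF>\<^sub>2\<close>, \<open>a + b + c\<close> is the only affine combination of three points, so a nonempty
  set is an affine subspace iff it is closed under \<open>xor3\<close>, and a map is affine iff it
  commutes with \<open>xor3\<close>.\<close>

definition xor3_closed :: "('a \<Rightarrow> bool) set \<Rightarrow> bool" where
  "xor3_closed S \<longleftrightarrow> (\<forall>a\<in>S. \<forall>b\<in>S. \<forall>c\<in>S. xor3 a b c \<in> S)"

definition affine_map :: "(('a \<Rightarrow> bool) \<Rightarrow> ('b \<Rightarrow> bool)) \<Rightarrow> bool" where
  "affine_map E \<longleftrightarrow> (\<forall>a b c. E (xor3 a b c) = xor3 (E a) (E b) (E c))"

definition affine_pred :: "(('a \<Rightarrow> bool) \<Rightarrow> bool) \<Rightarrow> bool" where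
  "affine_pred h \<longleftrightarrow> (\<forall>a b c. h (xor3 a b c) = (h a \<noteq> (h b \<noteq> h c)))"

lemma xor3_closedD: "xor3_closed S \<Longrightarrow> a \<in> S \<Longrightarrow> b \<in> S \<Longrightarrow> c \<in> S \<Longrightarrow> xor3 a b c \<in> S"
  unfolding xor3_closed_def by blast

lemma affine_mapD: "affine_map E \<Longrightarrow> E (xor3 a b c) = xor3 (E a) (E b) (E c)"
  unfolding affine_map_def by blast

lemma affine_predD: "affine_pred h \<Longrightarrow> h (xor3 a b c) = (h a \<noteq> (h b \<noteq> h c))"
  unfolding affine_pred_def by blast

lemma odd_card_filter_xor:
  assumes "finite U"
  shows "odd (card {v\<in>U. P v \<noteq> Q v}) = (odd (card {v\<in>U. P v}) \<noteq> odd (card {v\<in>U. Q v}))"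
  using assms
proof (induction U rule: finite_induct)
  case (insert x U)
  have filter_insert: "{v\<in>insert x U. R v} = (if R x then insert x {v\<in>U. R v} else {v\<in>U. R v})" for R
    by auto
  have "card (insert x {v\<in>U. R v}) = Suc (card {v\<in>U. R v})" for R
    using insert by (simp add: card_insert_disjoint)
  with insert.IH show ?case
    by (simp only: filter_insert split: if_split) auto
qed simp

lemma affine_sub_xor3_closed:
  assumes "finite Z" "affine_sub Z S"
  shows "xor3_closed S"
proof -
  obtain E where E: "\<forall>(U, c)\<in>E. U \<subseteq> Z"
    "S = {\<alpha> \<in> cube Z. \<forall>(U, c)\<in>E. odd (card {v\<in>U. \<alpha> v}) = c}"
    using assms(2) unfolding affine_sub_def by blast
  have parity_xor3: "odd (card {v\<in>U. xor3 a b c v}) =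
      (odd (card {v\<in>U. a v}) \<noteq> (odd (card {v\<in>U. b v}) \<noteq> odd (card {v\<in>U. c v})))"
    if "U \<subseteq> Z" for U a b c
  proof -
    have "finite U" using that assms(1) finite_subset by blast
    then show ?thesis
      using odd_card_filter_xor[of U a "\<lambda>v. b v \<noteq> c v"] odd_card_filter_xor[of U b c]
      by (simp only: xor3_apply)
  qed
  show ?thesis
    unfolding xor3_closed_def
  proof (intro ballI)
    fix a b c assume abc: "a \<in> S" "b \<in> S" "c \<in> S"
    have "odd (card {v\<in>U. xor3 a b c v}) = d" if "(U, d) \<in> E" for U d
    proof -
      have "U \<subseteq> Z" using E(1) that by blast
      moreover have "odd (card {v\<in>U. x v}) = d" if "x \<in> S" for x
        using that \<open>(U, d) \<in> E\<close> by (auto simp: E(2))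
      ultimately show ?thesis using parity_xor3[of U a b c] abc by simp
    qed
    moreover have "xor3 a b c \<in> cube Z" using abc by (auto simp: E(2) cube_def)
    ultimately show "xor3 a b c \<in> S" unfolding E(2) by blast
  qed
qed

lemma falsif_xor3_closed: "xor3_closed (falsif Z D)"
  unfolding xor3_closed_def falsif_def cube_def sat_lit_def by auto

lemma resx_tree_valid_root_xor3_closed:
  assumes "finite Z" "resx_tree_valid Z F t"
  shows "xor3_closed (root t)"
  using assms(2) by (induction t) (auto simp: falsif_xor3_closed affine_sub_xor3_closed[OF assms(1)])

lemma affine_map_range_xor3_closed: "affine_map E \<Longrightarrow> xor3_closed (range E)"
  unfolding xor3_closed_def by (auto simp flip: affine_mapD)

lemma affine_map_comp: "affine_map E \<Longrightarrow> affine_map G \<Longrightarrow> affine_map (E \<circ> G)"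
  by (simp add: affine_map_def)

lemma affine_map_override_on: "affine_map (\<lambda>\<beta>. override_on \<beta> f V)"
  by (auto simp: affine_map_def override_on_def)

lemma affine_pred_comp: "affine_pred h \<Longrightarrow> affine_map E \<Longrightarrow> affine_pred (\<lambda>\<beta>. h (E \<beta>))"
  by (simp add: affine_pred_def affine_map_def)

lemma affine_pred_xor_const: "affine_pred h \<Longrightarrow> affine_pred (\<lambda>\<beta>. h \<beta> \<noteq> c)"
  unfolding affine_pred_def by auto

definition flip :: "'a \<Rightarrow> ('a \<Rightarrow> bool) \<Rightarrow> ('a \<Rightarrow> bool)" where
  "flip u \<beta> = \<beta>(u := \<not> \<beta> u)"

lemma affine_map_flip_if:
  assumes "affine_map P" "affine_pred g"
  shows "affine_map (\<lambda>\<beta>. if g \<beta> then flip u (P \<beta>) else P \<beta>)"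
proof -
  have flip_if: "(if g \<beta> then flip u (P \<beta>) else P \<beta>) = (\<lambda>v. P \<beta> v \<noteq> (v = u \<and> g \<beta>))" for \<beta>
    by (auto simp: flip_def)
  show ?thesis
    unfolding affine_map_def flip_if
    by (auto simp: affine_mapD[OF assms(1)] affine_predD[OF assms(2)] fun_eq_iff)
qed

lemma xor3_closed_cover_disjoint:
  assumes R: "xor3_closed R" "R \<subseteq> A \<union> B" and A: "xor3_closed A" and B: "xor3_closed B"
    and a: "a \<in> R - A" and b: "b \<in> R - B"
  shows "R \<inter> A \<inter> B = {}"
proof (rule ccontr)
  assume "R \<inter> A \<inter> B \<noteq> {}"
  then obtain c where c: "c \<in> R" "c \<in> A" "c \<in> B" by blast
  have "a \<in> B" "b \<in> A" using a b R(2) by auto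
  have w: "xor3 b a c \<in> A \<union> B" using R a b c by (auto intro: xor3_closedD)
  have "xor3 b (xor3 b a c) c = a" "xor3 a (xor3 b a c) c = b" by (auto simp: fun_eq_iff)
  then show False
    using w xor3_closedD[OF A, of b "xor3 b a c" c] xor3_closedD[OF B, of a "xor3 b a c" c]
      \<open>a \<in> B\<close> \<open>b \<in> A\<close> a b c by auto
qed

lemma xor3_closed_cover_affine:
  assumes R: "xor3_closed R" "R \<subseteq> A \<union> B" "R \<inter> A \<inter> B = {}"
    and A: "xor3_closed A" and B: "xor3_closed B"
    and pqr: "p \<in> R" "q \<in> R" "r \<in> R"
  shows "xor3 p q r \<in> A \<longleftrightarrow> ((p \<in> A) \<noteq> ((q \<in> A) \<noteq> (r \<in> A)))"
proof -
  define w where "w = xor3 p q r"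
  have w: "w \<in> R" unfolding w_def using R pqr by (auto intro: xor3_closedD)
  have inv: "xor3 p q w = r" "xor3 w q r = p" "xor3 p w r = q"
    unfolding w_def by (auto simp: fun_eq_iff)
  have B_iff: "x \<in> B \<longleftrightarrow> x \<notin> A" if "x \<in> R" for x using that R(2,3) by blast
  have "w \<in> A \<longleftrightarrow> ((p \<in> A) \<noteq> ((q \<in> A) \<noteq> (r \<in> A)))"
    using xor3_closedD[OF A, of p q w] xor3_closedD[OF A, of w q r] xor3_closedD[OF A, of p w r]
      xor3_closedD[OF A, of p q r] xor3_closedD[OF B, of p q w] xor3_closedD[OF B, of w q r]
      xor3_closedD[OF B, of p w r] xor3_closedD[OF B, of p q r]
      B_iff[OF pqr(1)] B_iff[OF pqr(2)] B_iff[OF pqr(3)] B_iff[OF w]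
    unfolding inv w_def[symmetric] by argo
  then show ?thesis unfolding w_def .
qed

lemma affine_pred_flip:
  assumes "affine_pred h" "h (flip u \<gamma>) \<noteq> h \<gamma>"
  shows "h (flip u \<beta>) \<noteq> h \<beta>"
proof -
  have "flip u \<beta> = xor3 \<beta> \<gamma> (flip u \<gamma>)" by (auto simp: flip_def fun_eq_iff)
  then show ?thesis using affine_predD[OF assms(1), of \<beta> \<gamma> "flip u \<gamma>"] assms(2) by auto
qed

lemma ex_sensitive_coordinate:
  assumes "finite D" "\<forall>v. v \<notin> D \<longrightarrow> \<beta> v = \<gamma> v" "h \<beta> \<noteq> h \<gamma>"
  shows "\<exists>u\<in>D. \<exists>\<delta>. h (flip u \<delta>) \<noteq> h \<delta>"
  using assms
proof (induction D arbitrary: \<beta> rule: finite_induct)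
  case empty
  then show ?case by (auto simp: fun_eq_iff)
next
  case (insert x D)
  show ?case
  proof (cases "h (flip x \<beta>) \<noteq> h \<beta>")
    case False
    define \<beta>' where "\<beta>' = (if \<beta> x = \<gamma> x then \<beta> else flip x \<beta>)"
    have "\<forall>v. v \<notin> D \<longrightarrow> \<beta>' v = \<gamma> v" using insert.prems(1) by (auto simp: \<beta>'_def flip_def)
    moreover have "h \<beta>' \<noteq> h \<gamma>" using False insert.prems(2) by (simp add: \<beta>'_def)
    ultimately show ?thesis using insert.IH by blast
  qed blast
qed

section \<open>Simulating tree-like \<open>Res(\<oplus>)\<close> on lifted formulas\<close>

fun block :: "lvar \<Rightarrow> nat" where
  "block (X i _) = i"
| "block (Y i _) = i"

lemma lift_vars_X [simp]: "X i j \<in> lift_vars N l \<longleftrightarrow> i < N \<and> j < l"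
  by (auto simp: lift_vars_def)

lemma lift_vars_Y [simp]: "Y i j \<in> lift_vars N l \<longleftrightarrow> i < N \<and> j < 2 ^ l"
  by (auto simp: lift_vars_def)

lemma block_lt: "v \<in> lift_vars N l \<Longrightarrow> block v < N"
  by (cases v) auto

lemma lift_vars_eq:
  "lift_vars N l = (\<lambda>(i, j). X i j) ` ({..<N} \<times> {..<l}) \<union> (\<lambda>(i, j). Y i j) ` ({..<N} \<times> {..<2 ^ l})"
  unfolding lift_vars_def by auto

lemma finite_lift_vars: "finite (lift_vars N l)"
  by (simp add: lift_vars_eq)

definition encodes :: "nat \<Rightarrow> (lvar \<Rightarrow> bool) \<Rightarrow> nat \<Rightarrow> nat \<Rightarrow> bool" where
  "encodes l \<alpha> i t \<longleftrightarrow> (\<forall>j<l. \<alpha> (X i j) = odd (t div 2 ^ j))"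

text \<open>The invariant of the simulation.\<close>

definition block_embedding ::
    "nat \<Rightarrow> nat \<Rightarrow> nat set \<Rightarrow> (nat \<Rightarrow> bool) \<Rightarrow> ((lvar \<Rightarrow> bool) \<Rightarrow> (lvar \<Rightarrow> bool)) \<Rightarrow> bool" where
  "block_embedding N l Q \<rho> E \<longleftrightarrow> affine_map E
    \<and> (\<forall>\<beta> v. v \<in> lift_vars N l \<and> block v \<notin> Q \<longrightarrow> E \<beta> v = \<beta> v)
    \<and> (\<forall>\<beta> \<beta>'. (\<forall>v. v \<in> lift_vars N l \<and> block v \<notin> Q \<longrightarrow> \<beta> v = \<beta>' v) \<longrightarrow> E \<beta> = E \<beta>')
    \<and> (\<forall>i\<in>Q. \<forall>\<beta> t. t < 2 ^ l \<and> encodes l (E \<beta>) i t \<longrightarrow> E \<beta> (Y i t) = \<rho> i)"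

context
  fixes N l Q \<rho> E
  assumes E: "block_embedding N l Q \<rho> E"
begin

lemma block_embedding_affine: "affine_map E"
  using E by (simp add: block_embedding_def)

lemma block_embedding_free: "v \<in> lift_vars N l \<Longrightarrow> block v \<notin> Q \<Longrightarrow> E \<beta> v = \<beta> v"
  using E by (simp add: block_embedding_def)

lemma block_embedding_cong:
  assumes "\<And>v. v \<in> lift_vars N l \<Longrightarrow> block v \<notin> Q \<Longrightarrow> \<beta> v = \<beta>' v"
  shows "E \<beta> = E \<beta>'"
proof -
  have "\<forall>\<beta> \<beta>'. (\<forall>v. v \<in> lift_vars N l \<and> block v \<notin> Q \<longrightarrow> \<beta> v = \<beta>' v) \<longrightarrow> E \<beta> = E \<beta>'"
    using E unfolding block_embedding_def by (elim conjE) assumption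
  then show ?thesis using assms by simp
qed

lemma block_embedding_select:
  assumes "i \<in> Q" "t < 2 ^ l" "encodes l (E \<beta>) i t"
  shows "E \<beta> (Y i t) = \<rho> i"
proof -
  have "\<forall>i\<in>Q. \<forall>\<beta> t. t < 2 ^ l \<and> encodes l (E \<beta>) i t \<longrightarrow> E \<beta> (Y i t) = \<rho> i"
    using E unfolding block_embedding_def by (elim conjE) assumption
  then show ?thesis using assms by simp
qed

end

lemma block_embedding_init: "block_embedding N l {} \<rho> (\<lambda>\<beta> v. v \<in> lift_vars N l \<and> \<beta> v)"
  unfolding block_embedding_def affine_map_def by (auto simp: fun_eq_iff)

text \<open>When \<open>u\<close>'s block is fixed, all its y-variables get the value \<open>b\<close> and its x-variables
  encode an index differing from \<open>u\<close>'s in bit 0 if \<open>u\<close> is a y-variable (this needs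
  \<open>l \<ge> 1\<close>); so changing the value of \<open>u\<close> alone never changes the selected y-value.\<close>

fun fixed_block :: "lvar \<Rightarrow> bool \<Rightarrow> lvar \<Rightarrow> bool" where
  "fixed_block (Y _ t) b (X _ j) = (j = 0 \<and> even t)"
| "fixed_block (X _ _) b (X _ j) = False"
| "fixed_block u b (Y _ _) = b"

lemma fixed_block_selects:
  assumes "1 \<le> l" and enc: "encodes l \<gamma> (block u) t"
    and fixed: "\<And>v. block v = block u \<Longrightarrow> v \<noteq> u \<Longrightarrow> \<gamma> v = fixed_block u b v"
  shows "\<gamma> (Y (block u) t) = b"
proof (cases "u = Y (block u) t")
  case True
  then obtain i where u: "u = Y i t" by blast
  then have "\<gamma> (X i 0) = even t" using fixed[of "X i 0"] by simp
  moreover have "\<gamma> (X i 0) = odd t" using enc \<open>1 \<le> l\<close> u by (simp add: encodes_def)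
  ultimately show ?thesis by simp
next
  case False
  then show ?thesis using fixed[of "Y (block u) t"] by simp
qed

lemma block_embedding_fix_block:
  assumes E: "block_embedding N l Q \<rho> E" and "1 \<le> l"
    and u: "u \<in> lift_vars N l" "block u \<notin> Q"
    and H: "affine_pred (\<lambda>\<beta>. H (E \<beta>))" and sensitive: "\<forall>\<beta>. H (E (flip u \<beta>)) \<noteq> H (E \<beta>)"
  shows "\<exists>E'. block_embedding N l (insert (block u) Q) (\<rho>(block u := b)) E'
    \<and> (\<forall>\<beta>. H (E' \<beta>) = c) \<and> range E' \<subseteq> range E"
proof -
  define i where "i = block u"
  have i: "i \<notin> Q" "i < N" using u block_lt by (auto simp: i_def)
  define P where "P = (\<lambda>\<beta>. override_on \<beta> (fixed_block u b) {v. block v = i})"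
  define G where "G \<beta> = (if H (E (P \<beta>)) \<noteq> c then flip u (P \<beta>) else P \<beta>)" for \<beta>
  have P: "affine_map P" unfolding P_def by (rule affine_map_override_on)
  have G_P: "G \<beta> v = P \<beta> v" if "v \<noteq> u" for \<beta> v
    using that by (simp add: G_def flip_def)
  have "affine_map G"
    unfolding G_def by (rule affine_map_flip_if[OF P affine_pred_xor_const[OF affine_pred_comp[OF H P]]])
  then have affine: "affine_map (E \<circ> G)"
    by (rule affine_map_comp[OF block_embedding_affine[OF E]])
  have target: "H ((E \<circ> G) \<beta>) = c" for \<beta>
    using sensitive by (cases "H (E (P \<beta>)) = c") (auto simp: G_def)
  have free: "(E \<circ> G) \<beta> v = \<beta> v" if "v \<in> lift_vars N l" "block v \<notin> insert i Q" for \<beta> v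
  proof -
    have "v \<noteq> u" "block v \<noteq> i" "block v \<notin> Q" using that by (auto simp: i_def)
    then show ?thesis using that(1) block_embedding_free[OF E] G_P by (simp add: P_def)
  qed
  have cong: "(E \<circ> G) \<beta> = (E \<circ> G) \<beta>'"
    if agree: "\<forall>v. v \<in> lift_vars N l \<and> block v \<notin> insert i Q \<longrightarrow> \<beta> v = \<beta>' v" for \<beta> \<beta>'
  proof -
    have P_agree: "P \<beta> v = P \<beta>' v" if "v \<in> lift_vars N l" "block v \<notin> Q" for v
      using agree that by (auto simp: P_def override_on_def)
    have "E (P \<beta>) = E (P \<beta>')" by (rule block_embedding_cong[OF E]) (rule P_agree)
    then have "G \<beta> v = G \<beta>' v" if "v \<in> lift_vars N l" "block v \<notin> Q" for v
      using P_agree[OF that] by (auto simp: G_def flip_def)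
    then show ?thesis unfolding comp_def by (rule block_embedding_cong[OF E])
  qed
  have select: "(E \<circ> G) \<beta> (Y i' t) = (\<rho>(i := b)) i'"
    if "i' \<in> insert i Q" "t < 2 ^ l" "encodes l ((E \<circ> G) \<beta>) i' t" for i' \<beta> t
  proof (cases "i' \<in> Q")
    case True
    then show ?thesis using that block_embedding_select[OF E] i by auto
  next
    case False
    then have "i' = i" using that by simp
    then have "encodes l (G \<beta>) i t"
      using that(3) block_embedding_free[OF E] i by (auto simp: encodes_def)
    moreover have "G \<beta> v = fixed_block u b v" if "block v = block u" "v \<noteq> u" for v
      using that G_P by (simp add: P_def i_def)
    ultimately have "G \<beta> (Y i t) = b" using fixed_block_selects[OF \<open>1 \<le> l\<close>] by (simp add: i_def)
    then show ?thesis using block_embedding_free[OF E] \<open>i' = i\<close> that(2) i by simp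
  qed
  have "block_embedding N l (insert i Q) (\<rho>(i := b)) (E \<circ> G)"
    unfolding block_embedding_def using affine free cong select by blast
  then show ?thesis using target unfolding i_def by (intro exI[of _ "E \<circ> G"]) auto
qed

lemma block_embedding_split:
  assumes E: "block_embedding N l Q \<rho> E" and "1 \<le> l"
    and cover: "range E \<subseteq> S\<^sub>1 \<union> S\<^sub>2" and S\<^sub>1: "xor3_closed S\<^sub>1" and S\<^sub>2: "xor3_closed S\<^sub>2"
    and not1: "\<not> range E \<subseteq> S\<^sub>1" and not2: "\<not> range E \<subseteq> S\<^sub>2"
  shows "\<exists>i E\<^sub>1 E\<^sub>2. block_embedding N l (insert i Q) (\<rho>(i := False)) E\<^sub>1 \<and> range E\<^sub>1 \<subseteq> S\<^sub>1
    \<and> block_embedding N l (insert i Q) (\<rho>(i := True)) E\<^sub>2 \<and> range E\<^sub>2 \<subseteq> S\<^sub>2"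
proof -
  have R: "xor3_closed (range E)"
    by (rule affine_map_range_xor3_closed[OF block_embedding_affine[OF E]])
  obtain \<beta>\<^sub>1 \<beta>\<^sub>2 where \<beta>: "E \<beta>\<^sub>1 \<notin> S\<^sub>1" "E \<beta>\<^sub>2 \<notin> S\<^sub>2" using not1 not2 by blast
  then have disjoint: "range E \<inter> S\<^sub>1 \<inter> S\<^sub>2 = {}"
    using xor3_closed_cover_disjoint[OF R cover S\<^sub>1 S\<^sub>2] by blast
  define H where "H \<alpha> \<longleftrightarrow> \<alpha> \<in> S\<^sub>1" for \<alpha>
  have H: "affine_pred (\<lambda>\<beta>. H (E \<beta>))"
    unfolding affine_pred_def H_def affine_mapD[OF block_embedding_affine[OF E]]
    using xor3_closed_cover_affine[OF R cover disjoint S\<^sub>1 S\<^sub>2] by blast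
  define V where "V = {v \<in> lift_vars N l. block v \<notin> Q}"
  define restr where "restr \<beta> v \<longleftrightarrow> v \<in> V \<and> \<beta> v" for \<beta> v
  have "E (restr \<beta>) = E \<beta>" for \<beta>
    by (rule block_embedding_cong[OF E]) (simp add: restr_def V_def)
  then have "H (E (restr \<beta>\<^sub>1)) \<noteq> H (E (restr \<beta>\<^sub>2))" using \<beta> cover by (auto simp: H_def)
  moreover have "finite V" by (simp add: V_def finite_lift_vars)
  ultimately obtain u \<delta> where u: "u \<in> V" "H (E (flip u \<delta>)) \<noteq> H (E \<delta>)"
    using ex_sensitive_coordinate[of V "restr \<beta>\<^sub>1" "restr \<beta>\<^sub>2" "\<lambda>\<beta>. H (E \<beta>)"] by (auto simp: restr_def)
  then have "\<forall>\<beta>. H (E (flip u \<beta>)) \<noteq> H (E \<beta>)" using affine_pred_flip[OF H] by blast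
  moreover have "u \<in> lift_vars N l" "block u \<notin> Q" using u(1) by (auto simp: V_def)
  ultimately obtain E\<^sub>1 E\<^sub>2 where
    E\<^sub>1: "block_embedding N l (insert (block u) Q) (\<rho>(block u := False)) E\<^sub>1" "\<forall>\<beta>. H (E\<^sub>1 \<beta>)" and
    E\<^sub>2: "block_embedding N l (insert (block u) Q) (\<rho>(block u := True)) E\<^sub>2" "\<forall>\<beta>. \<not> H (E\<^sub>2 \<beta>)"
      "range E\<^sub>2 \<subseteq> range E"
    using block_embedding_fix_block[OF E \<open>1 \<le> l\<close> _ _ H, of u False True]
      block_embedding_fix_block[OF E \<open>1 \<le> l\<close> _ _ H, of u True False] by auto
  have "range E\<^sub>1 \<subseteq> S\<^sub>1" using E\<^sub>1(2) by (auto simp: H_def)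
  moreover have "range E\<^sub>2 \<subseteq> S\<^sub>2" using E\<^sub>2(2,3) cover by (auto simp: H_def)
  ultimately show ?thesis using E\<^sub>1(1) E\<^sub>2(1) by blast
qed

definition falsified_lits :: "'v set \<Rightarrow> ('v \<Rightarrow> bool) \<Rightarrow> 'v clause" where
  "falsified_lits Q \<rho> = {(i, b). i \<in> Q \<and> \<rho> i = (\<not> b)}"

lemma res_tree_resolve_falsified_lits:
  assumes s\<^sub>1: "res_tree_valid F s\<^sub>1" "root s\<^sub>1 \<subseteq> falsified_lits (insert z Q) (\<rho>(z := False))"
    and s\<^sub>2: "res_tree_valid F s\<^sub>2" "root s\<^sub>2 \<subseteq> falsified_lits (insert z Q) (\<rho>(z := True))"
  shows "\<exists>s. res_tree_valid F s \<and> root s \<subseteq> falsified_lits Q \<rho> \<and> psize s \<le> Suc (psize s\<^sub>1 + psize s\<^sub>2)"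
proof -
  have update: "falsified_lits (insert z Q) (\<rho>(z := b)) \<subseteq> falsified_lits Q \<rho> \<union> {(z, \<not> b)}" for b
    by (auto simp: falsified_lits_def split: if_splits)
  have r\<^sub>1: "root s\<^sub>1 \<subseteq> falsified_lits Q \<rho> \<union> {(z, True)}"
    using order_trans[OF s\<^sub>1(2) update[of False]] by simp
  have r\<^sub>2: "root s\<^sub>2 \<subseteq> falsified_lits Q \<rho> \<union> {(z, False)}"
    using order_trans[OF s\<^sub>2(2) update[of True]] by simp
  show ?thesis using res_tree_resolve_subsumed[OF s\<^sub>1(1) r\<^sub>1 s\<^sub>2(1) r\<^sub>2] unfolding Un_absorb .
qed

lemma block_embedding_lift_clause:
  assumes E: "block_embedding N l Q \<rho> E"
    and C: "fst ` C \<subseteq> {..<N}" and \<tau>: "\<tau> \<in> C \<rightarrow>\<^sub>E {..<2 ^ l}"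
    and range: "range E \<subseteq> falsif (lift_vars N l) (lift_clause l C \<tau>)"
  shows "C \<subseteq> falsified_lits Q \<rho>"
  unfolding falsified_lits_def
proof clarify
  fix i b assume ib: "(i, b) \<in> C"
  have falsified: "E (\<lambda>_. b) \<in> falsif (lift_vars N l) (lift_clause l C \<tau>)" using range by blast
  have "(Y i (\<tau> (i, b)), b) \<in> lift_clause l C \<tau>" using ib unfolding lift_clause_def by force
  then have Y: "E (\<lambda>_. b) (Y i (\<tau> (i, b))) \<noteq> b" using falsified by (auto simp: falsif_def sat_lit_def)
  have "(X i j, \<not> odd (\<tau> (i, b) div 2 ^ j)) \<in> lift_clause l C \<tau>" if "j < l" for j
    using ib that unfolding lift_clause_def by force
  then have enc: "encodes l (E (\<lambda>_. b)) i (\<tau> (i, b))"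
    using falsified by (fastforce simp: falsif_def sat_lit_def encodes_def)
  have t: "\<tau> (i, b) < 2 ^ l" and "i < N" using \<tau> C ib by force+
  have "i \<in> Q"
  proof (rule ccontr)
    assume "i \<notin> Q"
    then show False using Y block_embedding_free[OF E] t \<open>i < N\<close> by simp
  qed
  then show "i \<in> Q \<and> \<rho> i = (\<not> b)" using Y block_embedding_select[OF E _ t enc] by auto
qed

lemma resx_tree_simulation:
  assumes "1 \<le> l" and vars: "\<forall>C\<in>\<phi>. fst ` C \<subseteq> {..<N}"
    and "resx_tree_valid (lift_vars N l) (lift l \<phi>) t" "block_embedding N l Q \<rho> E" "range E \<subseteq> root t"
  shows "\<exists>s. res_tree_valid \<phi> s \<and> psize s \<le> psize t \<and> root s \<subseteq> falsified_lits Q \<rho>"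
  using assms(3-)
proof (induction t arbitrary: Q \<rho> E)
  case (Ax S)
  then obtain C \<tau> where C: "C \<in> \<phi>" "\<tau> \<in> C \<rightarrow>\<^sub>E {..<2 ^ l}" "S = falsif (lift_vars N l) (lift_clause l C \<tau>)"
    by (auto simp: lift_def)
  then have "C \<subseteq> falsified_lits Q \<rho>"
    using block_embedding_lift_clause[OF Ax.prems(2)] vars Ax.prems(3) by simp
  then show ?case using C(1) by (intro exI[of _ "Ax C"]) simp
next
  case (Der S t\<^sub>1 t\<^sub>2)
  have valid: "resx_tree_valid (lift_vars N l) (lift l \<phi>) t\<^sub>1" "resx_tree_valid (lift_vars N l) (lift l \<phi>) t\<^sub>2"
    and cover: "range E \<subseteq> root t\<^sub>1 \<union> root t\<^sub>2" using Der.prems by auto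
  consider "range E \<subseteq> root t\<^sub>1" | "range E \<subseteq> root t\<^sub>2" | "\<not> range E \<subseteq> root t\<^sub>1" "\<not> range E \<subseteq> root t\<^sub>2"
    by blast
  then show ?case
  proof cases
    case 1
    then obtain s where "res_tree_valid \<phi> s" "psize s \<le> psize t\<^sub>1" "root s \<subseteq> falsified_lits Q \<rho>"
      using Der.IH(1)[OF valid(1) Der.prems(2)] by blast
    then show ?thesis by (intro exI[of _ s]) simp
  next
    case 2
    then obtain s where "res_tree_valid \<phi> s" "psize s \<le> psize t\<^sub>2" "root s \<subseteq> falsified_lits Q \<rho>"
      using Der.IH(2)[OF valid(2) Der.prems(2)] by blast
    then show ?thesis by (intro exI[of _ s]) simp
  next
    case 3
    obtain i E\<^sub>1 E\<^sub>2 where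
      E\<^sub>1: "block_embedding N l (insert i Q) (\<rho>(i := False)) E\<^sub>1" "range E\<^sub>1 \<subseteq> root t\<^sub>1" and
      E\<^sub>2: "block_embedding N l (insert i Q) (\<rho>(i := True)) E\<^sub>2" "range E\<^sub>2 \<subseteq> root t\<^sub>2"
      using block_embedding_split[OF Der.prems(2) \<open>1 \<le> l\<close> cover _ _ 3]
        resx_tree_valid_root_xor3_closed[OF finite_lift_vars] valid by metis
    obtain s\<^sub>1 s\<^sub>2 where
      s\<^sub>1: "res_tree_valid \<phi> s\<^sub>1" "psize s\<^sub>1 \<le> psize t\<^sub>1" "root s\<^sub>1 \<subseteq> falsified_lits (insert i Q) (\<rho>(i := False))" and
      s\<^sub>2: "res_tree_valid \<phi> s\<^sub>2" "psize s\<^sub>2 \<le> psize t\<^sub>2" "root s\<^sub>2 \<subseteq> falsified_lits (insert i Q) (\<rho>(i := True))"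
      using Der.IH(1)[OF valid(1) E\<^sub>1] Der.IH(2)[OF valid(2) E\<^sub>2] by blast
    obtain s where "res_tree_valid \<phi> s" "root s \<subseteq> falsified_lits Q \<rho>"
      "psize s \<le> Suc (psize s\<^sub>1 + psize s\<^sub>2)"
      using res_tree_resolve_falsified_lits[OF s\<^sub>1(1,3) s\<^sub>2(1,3)] by blast
    then show ?thesis using s\<^sub>1(2) s\<^sub>2(2) by (intro exI[of _ s]) auto
  qed
qed

section \<open>A tree-like \<open>Res(\<oplus>)\<close> refutation of the lifted formula\<close>

lemma ex_nat_bits: "\<exists>t::nat. t < 2 ^ l \<and> (\<forall>j<l. f j = odd (t div 2 ^ j))"
proof (induction l arbitrary: f)
  case (Suc l)
  obtain t :: nat where t: "t < 2 ^ l" "\<forall>j<l. f (Suc j) = odd (t div 2 ^ j)"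
    using Suc.IH[of "\<lambda>j. f (Suc j)"] by blast
  have "f j = odd ((of_bool (f 0) + 2 * t) div 2 ^ j)" if "j < Suc l" for j
  proof (cases j)
    case (Suc j')
    then have "(of_bool (f 0) + 2 * t) div 2 ^ j = t div 2 ^ j'" by (simp add: div_mult2_eq)
    then show ?thesis using t(2) Suc that by simp
  qed simp
  moreover have "of_bool (f 0) + 2 * t < 2 ^ Suc l" using t(1) by (cases "f 0") auto
  ultimately show ?case by blast
qed simp

lemma lift_falsifies_cube:
  assumes "\<not> satisfiable \<phi>" "\<alpha> \<in> cube (lift_vars N l)"
  shows "\<exists>D\<in>lift l \<phi>. \<alpha> \<in> falsif (lift_vars N l) D"
proof -
  have "\<exists>t. t < 2 ^ l \<and> encodes l \<alpha> i t" for i unfolding encodes_def by (rule ex_nat_bits)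
  then obtain adr where adr: "\<forall>i. adr i < 2 ^ l \<and> encodes l \<alpha> i (adr i)"
    using choice[of "\<lambda>i t. t < 2 ^ l \<and> encodes l \<alpha> i t"] by blast
  obtain C where C: "C \<in> \<phi>" "\<forall>lt\<in>C. \<not> sat_lit (\<lambda>i. \<alpha> (Y i (adr i))) lt"
    using assms(1) unfolding satisfiable_def by blast
  define \<tau> where "\<tau> = restrict (\<lambda>lt. adr (fst lt)) C"
  have \<tau>: "\<tau> \<in> C \<rightarrow>\<^sub>E {..<2 ^ l}" using adr by (auto simp: \<tau>_def)
  have "\<not> sat_lit \<alpha> (X (fst lt) j, \<not> odd (\<tau> lt div 2 ^ j))" if "lt \<in> C" "j < l" for lt j
    using adr that by (simp add: \<tau>_def sat_lit_def encodes_def)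
  moreover have "\<not> sat_lit \<alpha> (Y (fst lt) (\<tau> lt), snd lt)" if "lt \<in> C" for lt
    using C(2) that by (simp add: \<tau>_def sat_lit_def)
  ultimately have "\<alpha> \<in> falsif (lift_vars N l) (lift_clause l C \<tau>)"
    using assms(2) unfolding falsif_def lift_clause_def by blast
  then show ?thesis using C(1) \<tau> unfolding lift_def by blast
qed

lemma affine_sub_fix:
  assumes "V \<subseteq> Z"
  shows "affine_sub Z {\<alpha> \<in> cube Z. \<forall>v\<in>V. \<alpha> v = \<alpha>\<^sub>0 v}"
proof -
  have "{w\<in>{v}. \<alpha> w} = (if \<alpha> v then {v} else {})" for \<alpha> :: "'a \<Rightarrow> bool" and v
    by auto
  then have "odd (card {w\<in>{v}. \<alpha> w}) = \<alpha> v" for \<alpha> :: "'a \<Rightarrow> bool" and v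
    by simp
  then have "{\<alpha> \<in> cube Z. \<forall>v\<in>V. \<alpha> v = \<alpha>\<^sub>0 v}
      = {\<alpha> \<in> cube Z. \<forall>(U, c)\<in>(\<lambda>v. ({v}, \<alpha>\<^sub>0 v)) ` V. odd (card {v\<in>U. \<alpha> v}) = c}"
    by auto
  moreover have "\<forall>(U, c)\<in>(\<lambda>v. ({v}, \<alpha>\<^sub>0 v)) ` V. U \<subseteq> Z" using assms by auto
  ultimately show ?thesis unfolding affine_sub_def by blast
qed

lemma resx_tree_subcube:
  assumes covered: "\<forall>\<alpha>\<in>cube Z. \<exists>D\<in>F. \<alpha> \<in> falsif Z D"
    and "finite W" "W \<subseteq> Z" "\<alpha>\<^sub>0 \<in> cube Z"
  shows "\<exists>t. resx_tree_valid Z F t \<and> root t = {\<alpha> \<in> cube Z. \<forall>v\<in>Z - W. \<alpha> v = \<alpha>\<^sub>0 v}"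
  using assms(2-)
proof (induction W arbitrary: \<alpha>\<^sub>0 rule: finite_induct)
  case empty
  obtain D where D: "D \<in> F" "\<alpha>\<^sub>0 \<in> falsif Z D" using covered empty by blast
  let ?K = "{\<alpha> \<in> cube Z. \<forall>v\<in>Z - {}. \<alpha> v = \<alpha>\<^sub>0 v}"
  have "?K \<subseteq> {\<alpha>\<^sub>0}"
  proof
    fix \<alpha> assume "\<alpha> \<in> ?K"
    then have "\<alpha> v = \<alpha>\<^sub>0 v" for v using empty(2) by (cases "v \<in> Z") (auto simp: cube_def)
    then show "\<alpha> \<in> {\<alpha>\<^sub>0}" by auto
  qed
  moreover have "affine_sub Z ?K" by (rule affine_sub_fix) simp
  ultimately have "resx_tree_valid Z F (Der ?K (Ax (falsif Z D)) (Ax (falsif Z D)))" using D by auto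
  then show ?case by (intro exI[of _ "Der ?K (Ax (falsif Z D)) (Ax (falsif Z D))"]) simp
next
  case (insert w W)
  let ?K = "{\<alpha> \<in> cube Z. \<forall>v\<in>Z - insert w W. \<alpha> v = \<alpha>\<^sub>0 v}"
  have "W \<subseteq> Z" "\<alpha>\<^sub>0(w := b) \<in> cube Z" for b using insert.prems by (auto simp: cube_def)
  then obtain t\<^sub>1 t\<^sub>2 where
    t\<^sub>1: "resx_tree_valid Z F t\<^sub>1" "root t\<^sub>1 = {\<alpha> \<in> cube Z. \<forall>v\<in>Z - W. \<alpha> v = (\<alpha>\<^sub>0(w := False)) v}" and
    t\<^sub>2: "resx_tree_valid Z F t\<^sub>2" "root t\<^sub>2 = {\<alpha> \<in> cube Z. \<forall>v\<in>Z - W. \<alpha> v = (\<alpha>\<^sub>0(w := True)) v}"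
    using insert.IH by meson
  have "?K \<subseteq> root t\<^sub>1 \<union> root t\<^sub>2"
  proof
    fix \<alpha> assume "\<alpha> \<in> ?K"
    then show "\<alpha> \<in> root t\<^sub>1 \<union> root t\<^sub>2" unfolding t\<^sub>1(2) t\<^sub>2(2) using insert.hyps(2) by (cases "\<alpha> w") auto
  qed
  moreover have "affine_sub Z ?K" by (rule affine_sub_fix) auto
  ultimately have "resx_tree_valid Z F (Der ?K t\<^sub>1 t\<^sub>2)" using t\<^sub>1 t\<^sub>2 by auto
  then show ?case by (intro exI[of _ "Der ?K t\<^sub>1 t\<^sub>2"]) simp
qed

lemma ex_resx_refutation:
  assumes "finite Z" "\<forall>\<alpha>\<in>cube Z. \<exists>D\<in>F. \<alpha> \<in> falsif Z D"
  shows "\<exists>t. resx_tree_valid Z F t \<and> root t = cube Z"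
proof -
  have "(\<lambda>_. False) \<in> cube Z" by (simp add: cube_def)
  then show ?thesis using resx_tree_subcube[OF assms(2) assms(1) subset_refl] by simp
qed

lemma tree_ResX_attained:
  assumes "resx_tree_valid Z F s" "root s = cube Z"
  obtains t where "resx_tree_valid Z F t" "root t = cube Z" "psize t = tree_ResX Z F"
proof -
  let ?P = "\<lambda>n. \<exists>t. resx_tree_valid Z F t \<and> root t = cube Z \<and> psize t = n"
  have "?P (Least ?P)" by (rule LeastI_ex) (use assms in blast)
  then show ?thesis using that unfolding tree_ResX_def by blast
qed

lemma ex_res_refutation_le_tree_ResX_lift:
  assumes "1 \<le> l" "\<forall>C\<in>\<phi>. fst ` C \<subseteq> {..<N}" "\<not> satisfiable \<phi>"
  shows "\<exists>s. res_tree_valid \<phi> s \<and> root s = {} \<and> psize s \<le> tree_ResX (lift_vars N l) (lift l \<phi>)"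
proof -
  obtain t\<^sub>0 where "resx_tree_valid (lift_vars N l) (lift l \<phi>) t\<^sub>0" "root t\<^sub>0 = cube (lift_vars N l)"
    using ex_resx_refutation[OF finite_lift_vars] lift_falsifies_cube[OF assms(3)] by blast
  then obtain t where t: "resx_tree_valid (lift_vars N l) (lift l \<phi>) t" "root t = cube (lift_vars N l)"
    "psize t = tree_ResX (lift_vars N l) (lift l \<phi>)"
    by (rule tree_ResX_attained)
  have "range (\<lambda>\<beta> v. v \<in> lift_vars N l \<and> \<beta> v) \<subseteq> root t" using t(2) by (auto simp: cube_def)
  then show ?thesis
    using resx_tree_simulation[OF assms(1,2) t(1) block_embedding_init] t(3)
    by (fastforce simp: falsified_lits_def)
qed

section \<open>Size of the lifted formula\<close>

lemma card_lift_vars: "card (lift_vars N l) = N * (l + 2 ^ l)"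
proof -
  have "inj_on (\<lambda>(i, j). X i j) A" "inj_on (\<lambda>(i, j). Y i j) B" for A B
    by (auto simp: inj_on_def)
  then have "card (lift_vars N l) = card ({..<N} \<times> {..<l}) + card ({..<N} \<times> {..<(2::nat) ^ l})"
    unfolding lift_vars_eq by (subst card_Un_disjoint) (auto simp: card_image)
  then show ?thesis by (simp add: algebra_simps)
qed

lemma lift_clause_eq:
  "lift_clause l C \<tau> =
     (\<Union>lt\<in>C. insert (Y (fst lt) (\<tau> lt), snd lt) ((\<lambda>j. (X (fst lt) j, \<not> odd (\<tau> lt div 2 ^ j))) ` {..<l}))"
  unfolding lift_clause_def by blast

lemma lift_clause_Y_iff: "(Y i t, b) \<in> lift_clause l C \<tau> \<longleftrightarrow> (i, b) \<in> C \<and> \<tau> (i, b) = t"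
  unfolding lift_clause_def by force

lemma lift_clause_vars:
  assumes "fst ` C \<subseteq> {..<N}" "\<tau> \<in> C \<rightarrow>\<^sub>E {..<2 ^ l}"
  shows "fst ` lift_clause l C \<tau> \<subseteq> lift_vars N l"
  using assms unfolding lift_clause_eq by force

lemma finite_lift_clause: "finite C \<Longrightarrow> finite (lift_clause l C \<tau>)"
  unfolding lift_clause_eq by simp

lemma card_lift_clause_le:
  assumes "finite C"
  shows "card (lift_clause l C \<tau>) \<le> card C * (l + 1)"
proof -
  have bound: "card (insert a (f ` {..<l})) \<le> l + 1" for a :: "lvar lit" and f
    using card_insert_le_m1[of "l + 1" "f ` {..<l}" a] card_image_le[of "{..<l}" f] by simp
  have "card (lift_clause l C \<tau>)
      \<le> (\<Sum>lt\<in>C. card (insert (Y (fst lt) (\<tau> lt), snd lt) ((\<lambda>j. (X (fst lt) j, \<not> odd (\<tau> lt div 2 ^ j))) ` {..<l})))"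
    unfolding lift_clause_eq by (rule card_UN_le[OF assms])
  also have "\<dots> \<le> (\<Sum>lt\<in>C. l + 1)" by (rule sum_mono) (rule bound)
  finally show ?thesis by simp
qed

lemma lift_eq_image: "lift l \<phi> = (\<lambda>(C, \<tau>). lift_clause l C \<tau>) ` (SIGMA C:\<phi>. C \<rightarrow>\<^sub>E {..<2 ^ l})"
  unfolding lift_def by auto

lemma inj_on_lift_clause: "inj_on (\<lambda>(C, \<tau>). lift_clause l C \<tau>) (SIGMA C:\<phi>. C \<rightarrow>\<^sub>E {..<2 ^ l})"
proof (rule inj_onI, clarsimp)
  fix C \<tau> C' \<tau>'
  assume \<tau>: "\<tau> \<in> C \<rightarrow>\<^sub>E {..<2 ^ l}" "\<tau>' \<in> C' \<rightarrow>\<^sub>E {..<2 ^ l}"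
    and eq: "lift_clause l C \<tau> = lift_clause l C' \<tau>'"
  have Y: "(i, b) \<in> C \<and> \<tau> (i, b) = t \<longleftrightarrow> (i, b) \<in> C' \<and> \<tau>' (i, b) = t" for i b t
    using eq lift_clause_Y_iff by metis
  then have "C = C'" by fast
  moreover have "\<tau> = \<tau>'" by (rule PiE_ext[OF \<tau>(1)]) (use \<tau>(2) Y \<open>C = C'\<close> in auto)
  ultimately show "C = C' \<and> \<tau> = \<tau>'" ..
qed

lemma lift_clauses_bounded:
  assumes "\<forall>C\<in>\<phi>. finite C \<and> card C \<le> k \<and> fst ` C \<subseteq> {..<N}" "D \<in> lift l \<phi>"
  shows "finite D \<and> card D \<le> k * (l + 1) \<and> fst ` D \<subseteq> lift_vars N l"
proof -
  obtain C \<tau> where C\<tau>: "C \<in> \<phi>" "\<tau> \<in> C \<rightarrow>\<^sub>E {..<2 ^ l}" "D = lift_clause l C \<tau>"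
    using assms(2) by (auto simp: lift_def)
  have "card D \<le> card C * (l + 1)" using card_lift_clause_le assms(1) C\<tau> by simp
  also have "\<dots> \<le> k * (l + 1)" using assms(1) C\<tau>(1) by (intro mult_right_mono) auto
  finally show ?thesis using assms(1) C\<tau> by (simp add: finite_lift_clause lift_clause_vars)
qed

lemma finite_lift: "finite \<phi> \<Longrightarrow> \<forall>C\<in>\<phi>. finite C \<Longrightarrow> finite (lift l \<phi>)"
  by (simp add: lift_eq_image finite_PiE)

lemma card_lift:
  assumes "finite \<phi>" "\<forall>C\<in>\<phi>. finite C"
  shows "card (lift l \<phi>) = (\<Sum>C\<in>\<phi>. (2 ^ l) ^ card C)"
proof -
  have "card (lift l \<phi>) = card (SIGMA C:\<phi>. C \<rightarrow>\<^sub>E {..<(2::nat) ^ l})"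
    unfolding lift_eq_image by (rule card_image[OF inj_on_lift_clause])
  also have "\<dots> = (\<Sum>C\<in>\<phi>. (2 ^ l) ^ card C)"
    using assms by (simp add: card_PiE finite_PiE)
  finally show ?thesis .
qed

lemma card_lift_le:
  assumes "finite \<phi>" "\<forall>C\<in>\<phi>. finite C \<and> card C \<le> k"
  shows "card (lift l \<phi>) \<le> (2 ^ l) ^ k * card \<phi>"
proof -
  have "(\<Sum>C\<in>\<phi>. ((2::nat) ^ l) ^ card C) \<le> (\<Sum>C\<in>\<phi>. (2 ^ l) ^ k)"
    using assms(2) by (intro sum_mono power_increasing) auto
  then show ?thesis using card_lift assms by (simp add: mult.commute)
qed

lemma card_lift_eq:
  assumes "finite \<phi>" "\<forall>C\<in>\<phi>. finite C \<and> card C = k"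
  shows "card (lift l \<phi>) = (2 ^ l) ^ k * card \<phi>"
  using card_lift assms by (simp add: mult.commute)

theorem corollary19:
  shows "\<exists>L::nat. \<forall>l\<ge>L. \<forall>(k::nat) (N::nat) (M::nat) (\<phi>::nat cnf).
    (finite \<phi> \<and> card \<phi> = M \<and> (\<forall>C\<in>\<phi>. finite C \<and> card C \<le> k \<and> fst ` C \<subseteq> {..<N})
      \<and> \<not> satisfiable \<phi>) \<longrightarrow>
    (let m = (2::nat) ^ l; \<phi>' = lift l \<phi>; Z = lift_vars N l in
      finite \<phi>' \<and> (\<forall>D\<in>\<phi>'. finite D \<and> card D \<le> k * (l + 1) \<and> fst ` D \<subseteq> Z)
      \<and> card Z = N * (l + m)
      \<and> card \<phi>' \<le> m ^ k * M \<and> ((\<forall>C\<in>\<phi>. card C = k) \<longrightarrow> card \<phi>' = m ^ k * M)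
      \<and> tree_Res \<phi> \<le> tree_ResX Z \<phi>'
      \<and> 2 powr (real (width_Res \<phi>) - real k) \<le> real (tree_Res \<phi>))"
proof (intro exI[of _ 1] allI impI, elim conjE)
  fix l k N M :: nat and \<phi> :: "nat cnf"
  assume "1 \<le> l" "finite \<phi>" "card \<phi> = M" "\<not> satisfiable \<phi>"
    and C: "\<forall>C\<in>\<phi>. finite C \<and> card C \<le> k \<and> fst ` C \<subseteq> {..<N}"
  obtain s where s: "res_tree_valid \<phi> s" "root s = {}" "psize s \<le> tree_ResX (lift_vars N l) (lift l \<phi>)"
    using ex_res_refutation_le_tree_ResX_lift[OF \<open>1 \<le> l\<close> _ \<open>\<not> satisfiable \<phi>\<close>] C by blast
  show "let m = (2::nat) ^ l; \<phi>' = lift l \<phi>; Z = lift_vars N l in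
      finite \<phi>' \<and> (\<forall>D\<in>\<phi>'. finite D \<and> card D \<le> k * (l + 1) \<and> fst ` D \<subseteq> Z)
      \<and> card Z = N * (l + m)
      \<and> card \<phi>' \<le> m ^ k * M \<and> ((\<forall>C\<in>\<phi>. card C = k) \<longrightarrow> card \<phi>' = m ^ k * M)
      \<and> tree_Res \<phi> \<le> tree_ResX Z \<phi>'
      \<and> 2 powr (real (width_Res \<phi>) - real k) \<le> real (tree_Res \<phi>)"
    unfolding Let_def
  proof (intro conjI impI card_lift_vars)
    show "finite (lift l \<phi>)" using finite_lift \<open>finite \<phi>\<close> C by blast
    show "\<forall>D\<in>lift l \<phi>. finite D \<and> card D \<le> k * (l + 1) \<and> fst ` D \<subseteq> lift_vars N l"
      using lift_clauses_bounded[OF C] by blast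
    show "card (lift l \<phi>) \<le> (2 ^ l) ^ k * M" using card_lift_le \<open>finite \<phi>\<close> \<open>card \<phi> = M\<close> C by blast
    show "card (lift l \<phi>) = (2 ^ l) ^ k * M" if "\<forall>C\<in>\<phi>. card C = k"
      using card_lift_eq \<open>finite \<phi>\<close> \<open>card \<phi> = M\<close> C that by blast
    show "tree_Res \<phi> \<le> tree_ResX (lift_vars N l) (lift l \<phi>)" using tree_Res_le s by fastforce
    show "2 powr (real (width_Res \<phi>) - real k) \<le> real (tree_Res \<phi>)"
      using two_powr_width_Res_le_tree_Res s(1,2) C by blast
  qed
qed

end
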